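(* Let $d\in\mathcal{S}G$. The $2$-quasi-abelian code $\mathfrak{C}_{1,d}$ over $\mathcal{S}$ is Hermitian LCD if and only if $\pi(\mathfrak{C}_{1,d})=\mathcal{C}_{1,\pi(d)}$ is a Hermitian LCD $2$-quasi-abelian code over $\mathbb{F}$.
   Context: Let $\mathcal{S}|\mathcal{R}$ be a Galois extension of degree $2$ of finite commutative chain rings, $\mathbf{m}$ the maximal ideal of $\mathcal{S}$, with residue fields $\mathcal{S}/\mathbf{m}=\mathbb{F}=\mathbb{F}_{q^2}$ and $\mathbb{F}_q$ for $\mathcal{R}$; let $\sigma$ generate $\mathrm{Aut}_{\mathcal{R}}(\mathcal{S})$ (order 2). Let $G$ be a finite abelian group of odd order $n$ with $\gcd(n,q)=1$. The Hermitian form on $(\mathcal{S}G)^2$ is $\langle(a_1,b_1),(a_2,b_2)\rangle_H=\sum_g a_{1,g}\sigma(a_{2,g})+\sum_g b_{1,g}\sigma(b_{2,g})$; on $(\mathbb{F}G)^2$ the Hermitian form is $\sum_g a_{1,g}a_{2,g}^q+\sum_g b_{1,g}b_{2,g}^q$. A $2$-quasi-abelian code over $\mathcal{S}$ (resp. $\mathbb{F}$) is an $\mathcal{S}G$- (resp. $\mathbb{F}G$-)submodule of $(\mathcal{S}G)^2$ (resp. $(\mathbb{F}G)^2$); it is Hermitian LCD if it meets its Hermitian dual only in $0$. $\mathfrak{C}_{c,d}=\{(uc,ud):u\in\mathcal{S}G\}$ and $\mathcal{C}_{a,b}=\{(sa,sb):s\in\mathbb{F}G\}$. The map $\pi:\mathcal{S}G\to\mathbb{F}G$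 reduces coefficients modulo $\mathbf{m}$, applied componentwise on $(\mathcal{S}G)^2$. *)

theory Defs
  imports Main "HOL-Computational_Algebra.Primes"
begin

definition ideal_in :: "'a::comm_ring_1 set \<Rightarrow> 'a set \<Rightarrow> bool" where
  "ideal_in A I \<longleftrightarrow> I \<subseteq> A \<and> 0 \<in> I \<and> (\<forall>x\<in>I. \<forall>y\<in>I. x + y \<in> I \<and> x - y \<in> I)
     \<and> (\<forall>r\<in>A. \<forall>x\<in>I. r * x \<in> I)"

definition subring :: "'a::comm_ring_1 set \<Rightarrow> bool" where
  "subring A \<longleftrightarrow> 0 \<in> A \<and> 1 \<in> A \<and> (\<forall>x\<in>A. \<forall>y\<in>A. x + y \<in> A \<and> x - y \<in> A \<and> x * y \<in> A)"

definition chain_ring_on :: "'a::comm_ring_1 set \<Rightarrow> bool" where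
  "chain_ring_on A \<longleftrightarrow> subring A \<and> finite A \<and> (0::'a) \<noteq> 1 \<and>
     (\<forall>I J. ideal_in A I \<and> ideal_in A J \<longrightarrow> I \<subseteq> J \<or> J \<subseteq> I)"

definition maximal_ideal_in :: "'a::comm_ring_1 set \<Rightarrow> 'a set \<Rightarrow> bool" where
  "maximal_ideal_in A M \<longleftrightarrow> ideal_in A M \<and> M \<noteq> A \<and>
     (\<forall>J. ideal_in A J \<and> M \<subseteq> J \<longrightarrow> J = M \<or> J = A)"

definition ring_hom_fun :: "('a::comm_ring_1 \<Rightarrow> 'b::comm_ring_1) \<Rightarrow> bool" where
  "ring_hom_fun f \<longleftrightarrow> (\<forall>x y. f (x + y) = f x + f y \<and> f (x * y) = f x * f y) \<and> f 1 = 1"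

definition ring_aut :: "('a::comm_ring_1 \<Rightarrow> 'a) \<Rightarrow> bool" where
  "ring_aut f \<longleftrightarrow> ring_hom_fun f \<and> bij f"

definition Aut_over :: "'a::comm_ring_1 set \<Rightarrow> ('a \<Rightarrow> 'a) set" where
  "Aut_over R = {f. ring_aut f \<and> (\<forall>r\<in>R. f r = r)}"

(* Group algebra A G, G a finite abelian group written additively:
   elements are functions 'g => 'a, product is convolution. *)
definition conv :: "('g::{ab_group_add,finite} \<Rightarrow> 'a::comm_ring_1) \<Rightarrow> ('g \<Rightarrow> 'a) \<Rightarrow> 'g \<Rightarrow> 'a" where
  "conv u v = (\<lambda>g. \<Sum>h\<in>UNIV. u h * v (g - h))"

definition qa_code :: "('g::{ab_group_add,finite} \<Rightarrow> 'a::comm_ring_1) \<Rightarrow> ('g \<Rightarrow> 'a) \<Rightarrow> (('g \<Rightarrow> 'a) \<times> ('g \<Rightarrow> 'a)) set" where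
  "qa_code c d = {(conv u c, conv u d) | u. True}"

definition herm :: "('a::comm_ring_1 \<Rightarrow> 'a) \<Rightarrow> ('g::finite \<Rightarrow> 'a) \<times> ('g \<Rightarrow> 'a) \<Rightarrow> ('g \<Rightarrow> 'a) \<times> ('g \<Rightarrow> 'a) \<Rightarrow> 'a" where
  "herm cj x y = (\<Sum>g\<in>UNIV. fst x g * cj (fst y g)) + (\<Sum>g\<in>UNIV. snd x g * cj (snd y g))"

definition herm_dual :: "('a::comm_ring_1 \<Rightarrow> 'a) \<Rightarrow> (('g::finite \<Rightarrow> 'a) \<times> ('g \<Rightarrow> 'a)) set \<Rightarrow> (('g \<Rightarrow> 'a) \<times> ('g \<Rightarrow> 'a)) set" where
  "herm_dual cj C = {y. \<forall>x\<in>C. herm cj x y = 0}"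

definition herm_LCD :: "('a::comm_ring_1 \<Rightarrow> 'a) \<Rightarrow> (('g::finite \<Rightarrow> 'a) \<times> ('g \<Rightarrow> 'a)) set \<Rightarrow> bool" where
  "herm_LCD cj C \<longleftrightarrow> C \<inter> herm_dual cj C = {((\<lambda>_. 0), (\<lambda>_. 0))}"

definition red_pair :: "('s \<Rightarrow> 'f) \<Rightarrow> ('g \<Rightarrow> 's) \<times> ('g \<Rightarrow> 's) \<Rightarrow> ('g \<Rightarrow> 'f) \<times> ('g \<Rightarrow> 'f)" where
  "red_pair p x = (p \<circ> fst x, p \<circ> snd x)"

end

theory Submission
  imports Defs "HOL-Number_Theory.Cong" "HOL-Computational_Algebra.Polynomial"
begin

(* Write C_{1,d} = {(u, u d)} and d^*(g) = sigma(d(-g)).  Moving u d across the form gives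
   <(u, u d), (v, v d)> = sum_h u_h sigma((v (1 + d d^* ))_h), so C_{1,d} is Hermitian LCD iff
   1 + d d^* is a unit of SG, and likewise over F for the involution x -> x^q.

   The residue map intertwines sigma with x -> x^q: sigma induces an automorphism of F of order 2
   whose fixed field is the image of R, of size q.  Hence pi(1 + d d^* ) = 1 + pi(d) pi(d)^*.
   Units lift along pi, because its kernel consists of elements with all coefficients in the
   maximal ideal, which is principal with nilpotent generator; and pi(C_{1,d}) = C_{1,pi(d)}
   holds simply because pi is onto. *)

abbreviation conv_one :: "'g::{ab_group_add,finite} \<Rightarrow> 'a::comm_ring_1" where
  "conv_one \<equiv> (\<lambda>g. if g = 0 then 1 else 0)"

lemma conv_commute: "conv u v = conv v u"
proof (rule ext)
  fix g
  show "conv u v g = conv v u g"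
    unfolding conv_def
    by (rule sum.reindex_bij_witness[of _ "\<lambda>k. g - k" "\<lambda>k. g - k"]) (auto simp: mult.commute)
qed

lemma conv_assoc: "conv (conv u v) w = conv u (conv v w)"
proof (rule ext)
  fix g
  have "conv (conv u v) w g = (\<Sum>h\<in>UNIV. \<Sum>k\<in>UNIV. u k * v (h - k) * w (g - h))"
    unfolding conv_def by (simp add: sum_distrib_right)
  also have "\<dots> = (\<Sum>k\<in>UNIV. \<Sum>h\<in>UNIV. u k * v (h - k) * w (g - h))"
    by (rule sum.swap)
  also have "\<dots> = (\<Sum>k\<in>UNIV. \<Sum>j\<in>UNIV. u k * v j * w (g - k - j))"
  proof (rule sum.cong[OF refl])
    fix k
    show "(\<Sum>h\<in>UNIV. u k * v (h - k) * w (g - h)) = (\<Sum>j\<in>UNIV. u k * v j * w (g - k - j))"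
      by (rule sum.reindex_bij_witness[of _ "\<lambda>j. j + k" "\<lambda>h. h - k"]) (auto simp: algebra_simps)
  qed
  also have "\<dots> = conv u (conv v w) g"
    unfolding conv_def by (simp add: sum_distrib_left mult.assoc)
  finally show "conv (conv u v) w g = conv u (conv v w) g" .
qed

lemma conv_one_right [simp]: "conv u conv_one = u"
  unfolding conv_def by (simp add: if_distrib cong: if_cong)

lemma conv_zero_left [simp]: "conv (\<lambda>_. 0) u = (\<lambda>_. 0)"
  and conv_zero_right [simp]: "conv u (\<lambda>_. 0) = (\<lambda>_. 0)"
  unfolding conv_def by simp_all

lemma conv_add_right: "conv u (\<lambda>g. v g + w g) = (\<lambda>g. conv u v g + conv u w g)"
  unfolding conv_def by (simp add: algebra_simps sum.distrib)

lemma conv_diff_left: "conv (\<lambda>g. u g - v g) w = (\<lambda>g. conv u w g - conv v w g)"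
  and conv_diff_right: "conv u (\<lambda>g. v g - w g) = (\<lambda>g. conv u v g - conv u w g)"
  unfolding conv_def by (simp_all add: algebra_simps sum_subtractf)

lemma conv_scale_left: "conv (\<lambda>g. c * u g) v = (\<lambda>g. c * conv u v g)"
  and conv_scale_right: "conv u (\<lambda>g. c * v g) = (\<lambda>g. c * conv u v g)"
  unfolding conv_def by (simp_all add: sum_distrib_left mult_ac)

lemma conv_inj_iff_right_inverse:
  fixes E :: "'g::{ab_group_add,finite} \<Rightarrow> 'a::{comm_ring_1,finite}"
  shows "(\<forall>v. conv v E = (\<lambda>_. 0) \<longrightarrow> v = (\<lambda>_. 0)) \<longleftrightarrow> (\<exists>w. conv E w = conv_one)"
proof
  assume kernel: "\<forall>v. conv v E = (\<lambda>_. 0) \<longrightarrow> v = (\<lambda>_. 0)"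
  have "inj (\<lambda>v. conv v E)"
  proof (rule injI)
    fix x y assume "conv x E = conv y E"
    then have "conv (\<lambda>g. x g - y g) E = (\<lambda>_. 0)" by (simp add: conv_diff_left)
    with kernel show "x = y" by (auto simp: fun_eq_iff)
  qed
  then have "surj (\<lambda>v. conv v E)" by (rule finite_UNIV_inj_surj[OF finite_UNIV])
  then obtain w where "conv w E = conv_one" by (metis surjD)
  then show "\<exists>w. conv E w = conv_one" by (metis conv_commute)
next
  assume "\<exists>w. conv E w = conv_one"
  then obtain w where w: "conv E w = conv_one" by blast
  show "\<forall>v. conv v E = (\<lambda>_. 0) \<longrightarrow> v = (\<lambda>_. 0)"
  proof (intro allI impI)
    fix v assume "conv v E = (\<lambda>_. 0)"
    then have "conv (conv v E) w = (\<lambda>_. 0)" by simp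
    then show "v = (\<lambda>_. 0)" by (simp add: conv_assoc w)
  qed
qed

lemma conv_fixed_by_nilpotent_multiple:
  assumes nilpotent: "\<gamma> ^ K = 0" and fixed: "v = conv v (\<lambda>g. \<gamma> * z g)"
  shows "v = (\<lambda>_. 0)"
proof -
  have "\<exists>w. v = (\<lambda>g. \<gamma> ^ k * w g)" for k
  proof (induction k)
    case 0
    show ?case by auto
  next
    case (Suc k)
    then obtain w where w: "v = (\<lambda>g. \<gamma> ^ k * w g)" by blast
    have "v = conv v (\<lambda>g. \<gamma> * z g)" by (rule fixed)
    also have "\<dots> = (\<lambda>g. \<gamma> ^ Suc k * conv w z g)"
      by (subst w) (simp add: conv_scale_left conv_scale_right, simp add: mult_ac)
    finally show ?case by blast
  qed
  then obtain w where "v = (\<lambda>g. \<gamma> ^ K * w g)" by blast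
  with nilpotent show ?thesis by simp
qed

lemma ring_hom_fun_add: "ring_hom_fun f \<Longrightarrow> f (x + y) = f x + f y"
  and ring_hom_fun_mult: "ring_hom_fun f \<Longrightarrow> f (x * y) = f x * f y"
  and ring_hom_fun_1: "ring_hom_fun f \<Longrightarrow> f 1 = 1"
  unfolding ring_hom_fun_def by simp_all

lemma ring_hom_fun_0: "ring_hom_fun f \<Longrightarrow> f 0 = 0"
  using ring_hom_fun_add[of f 0 0] by simp

lemma ring_hom_fun_diff: "ring_hom_fun f \<Longrightarrow> f (x - y) = f x - f y"
  using ring_hom_fun_add[of f "x - y" y] by (simp add: eq_diff_eq)

lemma ring_hom_fun_sum: "ring_hom_fun f \<Longrightarrow> f (sum h A) = (\<Sum>a\<in>A. f (h a))"
  by (induction A rule: infinite_finite_induct) (simp_all add: ring_hom_fun_0 ring_hom_fun_add)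

lemma ring_hom_fun_conv: "ring_hom_fun f \<Longrightarrow> f \<circ> conv u v = conv (f \<circ> u) (f \<circ> v)"
  unfolding conv_def comp_def by (simp add: ring_hom_fun_sum ring_hom_fun_mult)

lemma ring_hom_fun_conv_one: "ring_hom_fun f \<Longrightarrow> f \<circ> conv_one = conv_one"
  by (auto simp: fun_eq_iff ring_hom_fun_0 ring_hom_fun_1)

lemma qa_code_one: "qa_code conv_one d = {(u, conv u d) | u. True}"
  unfolding qa_code_def by simp

lemma red_pair_qa_code:
  assumes "ring_hom_fun p" and "surj p"
  shows "red_pair p ` qa_code c d = qa_code (p \<circ> c) (p \<circ> d)"
proof
  show "red_pair p ` qa_code c d \<subseteq> qa_code (p \<circ> c) (p \<circ> d)"
    unfolding qa_code_def red_pair_def by (auto simp: ring_hom_fun_conv[OF assms(1)])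
  show "qa_code (p \<circ> c) (p \<circ> d) \<subseteq> red_pair p ` qa_code c d"
  proof
    fix x assume "x \<in> qa_code (p \<circ> c) (p \<circ> d)"
    then obtain v where x: "x = (conv v (p \<circ> c), conv v (p \<circ> d))" unfolding qa_code_def by blast
    have "p \<circ> (inv p \<circ> v) = v" using surj_f_inv_f[OF assms(2)] by (simp add: fun_eq_iff)
    then have "red_pair p (conv (inv p \<circ> v) c, conv (inv p \<circ> v) d) = x"
      unfolding red_pair_def x by (simp add: ring_hom_fun_conv[OF assms(1)])
    then show "x \<in> red_pair p ` qa_code c d" unfolding qa_code_def by blast
  qed
qed

definition conv_adjoint :: "('a \<Rightarrow> 'a) \<Rightarrow> ('g::ab_group_add \<Rightarrow> 'a) \<Rightarrow> 'g \<Rightarrow> 'a" where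
  "conv_adjoint cj a = (\<lambda>g. cj (a (- g)))"

definition herm_gram :: "('a::comm_ring_1 \<Rightarrow> 'a) \<Rightarrow> ('g::{ab_group_add,finite} \<Rightarrow> 'a) \<Rightarrow> 'g \<Rightarrow> 'a" where
  "herm_gram cj d = (\<lambda>g. conv_one g + conv d (conv_adjoint cj d) g)"

lemma ring_hom_fun_herm_gram:
  assumes p: "ring_hom_fun p" and intertwines: "\<And>a. p (cj a) = cj' (p a)"
  shows "p \<circ> herm_gram cj d = herm_gram cj' (p \<circ> d)"
proof -
  have "p \<circ> conv_adjoint cj d = conv_adjoint cj' (p \<circ> d)"
    unfolding conv_adjoint_def comp_def by (simp add: intertwines)
  then have "p \<circ> conv d (conv_adjoint cj d) = conv (p \<circ> d) (conv_adjoint cj' (p \<circ> d))"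
    by (simp add: ring_hom_fun_conv[OF p])
  then show ?thesis
    unfolding herm_gram_def
    by (auto simp: fun_eq_iff ring_hom_fun_add[OF p] ring_hom_fun_0[OF p] ring_hom_fun_1[OF p])
qed

locale ring_involution =
  fixes cj :: "'a::comm_ring_1 \<Rightarrow> 'a"
  assumes hom: "ring_hom_fun cj" and involutive: "cj (cj x) = x"
begin

lemma eq_0_iff [simp]: "cj x = 0 \<longleftrightarrow> x = 0"
  by (metis involutive ring_hom_fun_0[OF hom])

lemma herm_sum_conv:
  fixes u a w :: "'g::{ab_group_add,finite} \<Rightarrow> 'a"
  shows "(\<Sum>g\<in>UNIV. conv u a g * cj (w g)) = (\<Sum>h\<in>UNIV. u h * cj (conv w (conv_adjoint cj a) h))"
proof -
  have "(\<Sum>g\<in>UNIV. conv u a g * cj (w g)) = (\<Sum>g\<in>UNIV. \<Sum>h\<in>UNIV. u h * a (g - h) * cj (w g))"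
    unfolding conv_def by (simp add: sum_distrib_right)
  also have "\<dots> = (\<Sum>h\<in>UNIV. \<Sum>g\<in>UNIV. u h * a (g - h) * cj (w g))"
    by (rule sum.swap)
  also have "\<dots> = (\<Sum>h\<in>UNIV. u h * cj (conv w (conv_adjoint cj a) h))"
    unfolding conv_def conv_adjoint_def
    by (simp add: ring_hom_fun_sum[OF hom] ring_hom_fun_mult[OF hom] involutive
        sum_distrib_left mult_ac)
  finally show ?thesis .
qed

lemma herm_qa_code_one:
  fixes u v d :: "'g::{ab_group_add,finite} \<Rightarrow> 'a"
  shows "herm cj (u, conv u d) (v, conv v d) = (\<Sum>h\<in>UNIV. u h * cj (conv v (herm_gram cj d) h))"
proof -
  have "herm cj (u, conv u d) (v, conv v d) =
     (\<Sum>h\<in>UNIV. u h * cj (v h)) + (\<Sum>h\<in>UNIV. u h * cj (conv (conv v d) (conv_adjoint cj d) h))"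
    unfolding herm_def by (simp add: herm_sum_conv)
  also have "\<dots> = (\<Sum>h\<in>UNIV. u h * cj (v h + conv (conv v d) (conv_adjoint cj d) h))"
    by (simp add: ring_hom_fun_add[OF hom] sum.distrib distrib_left)
  also have "\<dots> = (\<Sum>h\<in>UNIV. u h * cj (conv v (herm_gram cj d) h))"
    by (simp add: herm_gram_def conv_add_right conv_assoc)
  finally show ?thesis .
qed

lemma herm_sum_nondegenerate:
  fixes w :: "'g::finite \<Rightarrow> 'a"
  shows "(\<forall>u. (\<Sum>h\<in>UNIV. u h * cj (w h)) = 0) \<longleftrightarrow> w = (\<lambda>_. 0)"
proof (intro iffI ext)
  fix g assume "\<forall>u. (\<Sum>h\<in>UNIV. u h * cj (w h)) = 0"
  then have "(\<Sum>h\<in>UNIV. of_bool (h = g) * cj (w h)) = 0" by (rule spec)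
  then show "w g = 0" by simp
qed (simp add: ring_hom_fun_0[OF hom])

lemma herm_LCD_qa_code_one_iff:
  fixes d :: "'g::{ab_group_add,finite} \<Rightarrow> 'a"
  shows "herm_LCD cj (qa_code conv_one d) \<longleftrightarrow>
    (\<forall>v. conv v (herm_gram cj d) = (\<lambda>_. 0) \<longrightarrow> v = (\<lambda>_. 0))"
proof -
  have "(v, conv v d) \<in> herm_dual cj (qa_code conv_one d) \<longleftrightarrow> conv v (herm_gram cj d) = (\<lambda>_. 0)"
    for v
    unfolding herm_dual_def qa_code_one
    by (auto simp: herm_qa_code_one simp flip: herm_sum_nondegenerate)
  then have "qa_code conv_one d \<inter> herm_dual cj (qa_code conv_one d) =
      {(v, conv v d) | v. conv v (herm_gram cj d) = (\<lambda>_. 0)}"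
    unfolding qa_code_one by blast
  then show ?thesis
    unfolding herm_LCD_def by (auto simp: set_eq_iff)
qed

end

lemma pow_card_mult_closed:
  fixes A :: "'f::field set"
  assumes "finite A" and "0 \<in> A" and mult_closed: "\<And>x y. x \<in> A \<Longrightarrow> y \<in> A \<Longrightarrow> x * y \<in> A"
    and "y \<in> A"
  shows "y ^ card A = y"
proof (cases "y = 0")
  case True
  with assms show ?thesis by (auto simp: card_gt_0_iff)
next
  case False
  let ?B = "A - {0}"
  have "(\<lambda>x. y * x) ` ?B = ?B"
    using assms False by (intro endo_inj_surj) (auto simp: inj_on_def)
  then have "prod (\<lambda>x. x) ?B = prod (\<lambda>x. x) ((\<lambda>x. y * x) ` ?B)" by simp
  also have "\<dots> = prod (\<lambda>x. y * x) ?B"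
    using False by (subst prod.reindex) (auto simp: inj_on_def)
  also have "\<dots> = y ^ card ?B * prod (\<lambda>x. x) ?B"
    by (simp add: prod.distrib)
  finally have "prod (\<lambda>x. x) ?B = y ^ card ?B * prod (\<lambda>x. x) ?B" .
  moreover have "prod (\<lambda>x. x) ?B \<noteq> 0"
    using \<open>finite A\<close> by (simp add: prod_zero_iff)
  ultimately have "y ^ card ?B = 1" by (metis mult_cancel_right1)
  moreover have "card A = Suc (card ?B)"
    using assms by (metis card_Suc_Diff1)
  ultimately show ?thesis by simp
qed

lemma card_pow_fixed_le:
  assumes "q \<ge> 2"
  shows "card {x::'f::field. x ^ q = x} \<le> q"
proof -
  define P :: "'f poly" where "P = monom 1 q - [:0, 1:]"
  have "coeff P q = 1" using assms by (simp add: P_def coeff_pCons split: nat.split)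
  then have "P \<noteq> 0" by auto
  have "degree P \<le> q"
    unfolding P_def
    by (rule order.trans[OF degree_diff_le_max]) (use assms in \<open>auto simp: degree_monom_eq\<close>)
  moreover have "{x::'f. x ^ q = x} = {x. poly P x = 0}"
    by (auto simp: P_def poly_monom)
  ultimately show ?thesis using card_poly_roots_bound[OF \<open>P \<noteq> 0\<close>] by simp
qed

definition add_closed :: "'a::monoid_add set \<Rightarrow> bool" where
  "add_closed B \<longleftrightarrow> 0 \<in> B \<and> (\<forall>x\<in>B. \<forall>y\<in>B. x + y \<in> B)"

lemma add_closed_of_nat_mult: "add_closed B \<Longrightarrow> x \<in> B \<Longrightarrow> of_nat n * x \<in> B"
  by (induction n) (auto simp: add_closed_def distrib_right)

lemma add_closed_uminus:
  fixes x :: "'a::{ring_1,finite}"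
  assumes "add_closed B" "x \<in> B"
  shows "- x \<in> B"
proof -
  have "CHAR('a) > 0" by (rule finite_imp_CHAR_pos[OF finite_UNIV])
  then have "- x = of_nat (CHAR('a) - 1) * x"
    by (simp add: of_nat_diff algebra_simps)
  then show ?thesis using add_closed_of_nat_mult[OF assms] by simp
qed

lemma add_closed_of_nat_mult_cancel:
  fixes a :: "'a::{ring_1,finite}"
  assumes c: "prime CHAR('a)" and B: "add_closed B"
    and e: "0 < e" "e < CHAR('a)" and "of_nat e * a \<in> B"
  shows "a \<in> B"
proof -
  have "\<not> CHAR('a) dvd e" using e by (auto dest: dvd_imp_le)
  then have "coprime e CHAR('a)" by (metis prime_imp_coprime[OF c] coprime_commute)
  then obtain k where "[k * e = 1] (mod CHAR('a))"
    by (metis cong_solve_coprime_nat One_nat_def mult.commute)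
  then have "(of_nat (k * e) :: 'a) = of_nat 1" by (simp only: of_nat_eq_iff_cong_CHAR)
  then have "of_nat k * of_nat e = (1 :: 'a)" by simp
  then have "of_nat k * (of_nat e * a) = a" by (simp flip: mult.assoc)
  with add_closed_of_nat_mult[OF B \<open>of_nat e * a \<in> B\<close>, of k] show ?thesis by simp
qed

lemma add_closed_extend:
  fixes B :: "'a::{ring_1,finite} set"
  assumes c: "prime CHAR('a)" and B: "add_closed B" and a: "a \<notin> B"
  defines "B' \<equiv> (\<lambda>(b, j). b + of_nat j * a) ` (B \<times> {..<CHAR('a)})"
  shows "add_closed B'" and "B \<subset> B'" and "card B' = card B * CHAR('a)"
proof -
  let ?c = "CHAR('a)"
  have "?c > 1" using c by (rule prime_gt_1_nat)
  have of_nat_mod: "(of_nat (n mod ?c) :: 'a) = of_nat n" for n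
    by (simp add: of_nat_eq_iff_cong_CHAR cong_def)
  show "add_closed B'"
    unfolding add_closed_def
  proof (intro conjI ballI)
    show "0 \<in> B'" unfolding B'_def using B \<open>?c > 1\<close>
      by (intro rev_image_eqI[of "(0, 0)"]) (auto simp: add_closed_def)
    fix x y assume "x \<in> B'" "y \<in> B'"
    then obtain b j b' j' where "b \<in> B" "b' \<in> B"
      and "x = b + of_nat j * a" "y = b' + of_nat j' * a"
      unfolding B'_def by auto
    then have "x + y = (b + b') + of_nat ((j + j') mod ?c) * a" "b + b' \<in> B"
      using B by (auto simp: of_nat_mod algebra_simps add_closed_def)
    then show "x + y \<in> B'"
      unfolding B'_def using \<open>?c > 1\<close> by (intro rev_image_eqI[of "(b + b', (j + j') mod ?c)"]) auto
  qed
  have "b \<in> B'" if "b \<in> B" for b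
    unfolding B'_def using that \<open>?c > 1\<close> by (intro rev_image_eqI[of "(b, 0)"]) auto
  then have "B \<subseteq> B'" by blast
  moreover have "a \<in> B'" unfolding B'_def using B \<open>?c > 1\<close>
    by (intro rev_image_eqI[of "(0, 1)"]) (auto simp: add_closed_def)
  ultimately show "B \<subset> B'" using a by blast
  have no_collision: False
    if "j < j'" "j' < ?c" "b \<in> B" "b' \<in> B" "b + of_nat j * a = b' + of_nat j' * a" for b b' j j'
  proof -
    have "of_nat (j' - j) * a = b + - b'"
      using that by (simp add: of_nat_diff algebra_simps)
    also have "\<dots> \<in> B"
      using B that(3) add_closed_uminus[OF B that(4)] unfolding add_closed_def by blast
    finally show False
      using add_closed_of_nat_mult_cancel[OF c B, of "j' - j"] that a by simp
  qed
  have "inj_on (\<lambda>(b, j). b + of_nat j * a) (B \<times> {..<?c})"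
  proof (rule inj_onI, clarify)
    fix b j b' j'
    assume "b \<in> B" "j < ?c" "b' \<in> B" "j' < ?c" and eq: "b + of_nat j * a = b' + of_nat j' * a"
    then have "j = j'" using no_collision[of j j' b b'] no_collision[of j' j b' b] by fastforce
    with eq show "b = b' \<and> j = j'" by simp
  qed
  then show "card B' = card B * ?c"
    unfolding B'_def by (simp add: card_image card_cartesian_product)
qed

lemma card_UNIV_CHAR_power:
  assumes "prime CHAR('a::{ring_1,finite})"
  shows "\<exists>k. card (UNIV :: 'a set) = CHAR('a) ^ k"
proof -
  have "\<exists>k. card (UNIV :: 'a set) = CHAR('a) ^ k"
    if "add_closed B" "card B = CHAR('a) ^ k" for B :: "'a set" and k
    using that
  proof (induction "card (UNIV - B)" arbitrary: B k rule: less_induct)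
    case less
    show ?case
    proof (cases "B = UNIV")
      case True
      with less.prems show ?thesis by auto
    next
      case False
      then obtain a where a: "a \<notin> B" by blast
      note extend = add_closed_extend[OF assms less.prems(1) a]
      let ?B' = "(\<lambda>(b, j). b + of_nat j * a) ` (B \<times> {..<CHAR('a)})"
      have "card (UNIV - ?B') < card (UNIV - B)"
        using extend(2) by (intro psubset_card_mono) auto
      moreover have "card ?B' = CHAR('a) ^ Suc k"
        using extend(3) less.prems(2) by simp
      ultimately show ?thesis using less.hyps extend(1) by blast
    qed
  qed
  moreover have "add_closed {0::'a}" "card {0::'a} = CHAR('a) ^ 0" by (simp_all add: add_closed_def)
  ultimately show ?thesis by blast
qed

lemma frobenius_sqrt_card_add:
  fixes x y :: "'f::{field,finite}"
  assumes "card (UNIV :: 'f set) = q ^ 2"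
  shows "(x + y) ^ q = x ^ q + y ^ q"
proof -
  have c: "prime CHAR('f)"
    by (rule prime_CHAR_semidom) (rule finite_imp_CHAR_pos[OF finite_UNIV])
  obtain k where "q * q = CHAR('f) ^ k"
    using card_UNIV_CHAR_power[OF c] assms by (auto simp: power2_eq_square)
  then obtain i where "q = CHAR('f) ^ i" using prime_power_mult_nat[OF c] by blast
  then show ?thesis by (rule freshmans_dream'[OF c])
qed

lemma ring_involution_frobenius_sqrt_card:
  assumes "card (UNIV :: 'f::{field,finite} set) = q ^ 2"
  shows "ring_involution (\<lambda>x::'f. x ^ q)"
proof
  show "ring_hom_fun (\<lambda>x::'f. x ^ q)"
    unfolding ring_hom_fun_def by (simp add: frobenius_sqrt_card_add[OF assms] power_mult_distrib)
  have "x ^ card (UNIV :: 'f set) = x" for x :: 'f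
    by (rule pow_card_mult_closed) auto
  then show "(x ^ q) ^ q = x" for x :: 'f
    using assms by (simp flip: power_mult add: power2_eq_square)
qed

lemma ideal_in_principal: "ideal_in UNIV (range (\<lambda>t. x * t))"
  unfolding ideal_in_def
proof (intro conjI ballI)
  fix a b assume "a \<in> range (\<lambda>t. x * t)" "b \<in> range (\<lambda>t. x * t)"
  then obtain s t where "a = x * s" "b = x * t" by blast
  then show "a + b \<in> range (\<lambda>t. x * t)" "a - b \<in> range (\<lambda>t. x * t)"
    by (auto intro: range_eqI[of _ _ "s + t"] range_eqI[of _ _ "s - t"] simp: algebra_simps)
next
  fix r a assume "a \<in> range (\<lambda>t. x * t)"
  then obtain s where "a = x * s" by blast
  then show "r * a \<in> range (\<lambda>t. x * t)" by (auto intro: range_eqI[of _ _ "r * s"] simp: mult_ac)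
qed (auto intro: range_eqI[of _ _ 0])

locale chain_ring =
  fixes m :: "'s::{comm_ring_1,finite} set"
  assumes chain_ring_on: "chain_ring_on (UNIV :: 's set)"
    and maximal: "maximal_ideal_in UNIV m"
begin

lemma ideal: "ideal_in UNIV m"
  and proper: "m \<noteq> UNIV"
  and maximalD: "\<And>J. ideal_in UNIV J \<Longrightarrow> m \<subseteq> J \<Longrightarrow> J = m \<or> J = UNIV"
  using maximal unfolding maximal_ideal_in_def by auto

lemma add_mem: "x \<in> m \<Longrightarrow> y \<in> m \<Longrightarrow> x + y \<in> m"
  and mult_mem: "x \<in> m \<Longrightarrow> r * x \<in> m"
  using ideal unfolding ideal_in_def by auto

lemma one_not_mem: "1 \<notin> m"
  using mult_mem[of 1] proper by auto

lemma mem_not_unit: "x \<in> m \<Longrightarrow> x * y \<noteq> 1"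
  using mult_mem[of x y] one_not_mem by (metis mult.commute)

text \<open>A chain ring is local: an element outside \<open>m\<close> generates an ideal not contained in \<open>m\<close>,
  hence containing \<open>m\<close>, hence the whole ring.\<close>

lemma not_mem_imp_unit:
  assumes "x \<notin> m"
  shows "\<exists>y. x * y = 1"
proof -
  have "x \<in> range (\<lambda>t. x * t)" by (metis mult.right_neutral rangeI)
  with assms have "m \<subseteq> range (\<lambda>t. x * t)"
    using chain_ring_on ideal ideal_in_principal unfolding chain_ring_on_def by blast
  then have "range (\<lambda>t. x * t) = UNIV"
    using maximalD[OF ideal_in_principal] \<open>x \<in> range (\<lambda>t. x * t)\<close> assms by blast
  then show ?thesis by (metis UNIV_I imageE)
qed

lemma ring_aut_mem:
  assumes "ring_aut f" and "x \<in> m"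
  shows "f x \<in> m"
proof (rule ccontr)
  assume "f x \<notin> m"
  then obtain y where "f x * y = 1" using not_mem_imp_unit by blast
  moreover obtain y' where "y = f y'"
    using \<open>ring_aut f\<close> unfolding ring_aut_def by (metis bij_pointE)
  ultimately have "f (x * y') = f 1"
    using \<open>ring_aut f\<close> unfolding ring_aut_def ring_hom_fun_def by simp
  then have "x * y' = 1"
    using \<open>ring_aut f\<close> unfolding ring_aut_def by (simp add: bij_def inj_eq)
  with mem_not_unit \<open>x \<in> m\<close> show False by blast
qed

lemma mem_nilpotent:
  assumes "x \<in> m"
  shows "\<exists>n. x ^ n = 0"
proof -
  have "\<not> inj (\<lambda>n::nat. x ^ n)"
  proof
    assume "inj (\<lambda>n::nat. x ^ n)"
    then have "finite (UNIV :: nat set)" by (rule finite_imageD[rotated]) simp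
    then show False by simp
  qed
  then obtain a b where "a < b" and "x ^ a = x ^ b"
    unfolding inj_def by (metis linorder_neqE_nat)
  then obtain e where "e > 0" and "x ^ a * x ^ e = x ^ a"
    by (metis less_imp_add_positive power_add)
  then have "x ^ a * (1 - x ^ e) = 0" by (simp only: right_diff_distrib mult_1_right diff_self)
  moreover have "x ^ e \<in> m"
    using mult_mem[OF assms, of "x ^ (e - 1)"] power_minus_mult[OF \<open>e > 0\<close>] by metis
  then have "1 - x ^ e \<notin> m" using add_mem[of "1 - x ^ e" "x ^ e"] one_not_mem by auto
  then obtain y where "(1 - x ^ e) * y = 1" using not_mem_imp_unit by blast
  ultimately have "x ^ a = 0" by (metis mult.assoc mult_1_right mult_zero_left)
  then show ?thesis by blast
qed

text \<open>\<open>m\<close> is generated by an element whose principal ideal has maximal size among those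
  inside \<open>m\<close>: by the chain condition it contains all the others.\<close>

lemma principal: "\<exists>\<gamma>\<in>m. \<forall>y\<in>m. \<exists>t. y = \<gamma> * t"
proof -
  have "\<exists>x. x \<in> m \<and> (\<forall>y. y \<in> m \<longrightarrow> card (range (\<lambda>t. y * t)) \<le> card (range (\<lambda>t. x * t)))"
    using ideal unfolding ideal_in_def
    by (intro ex_has_greatest_nat[of _ 0 _ "Suc (card (UNIV :: 's set))"])
      (auto simp: le_imp_less_Suc card_mono)
  then obtain \<gamma> where \<gamma>: "\<gamma> \<in> m"
    and greatest: "\<And>y. y \<in> m \<Longrightarrow> card (range (\<lambda>t. y * t)) \<le> card (range (\<lambda>t. \<gamma> * t))"
    by blast
  have "y \<in> range (\<lambda>t. \<gamma> * t)" if "y \<in> m" for y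
  proof -
    have "range (\<lambda>t. y * t) \<subseteq> range (\<lambda>t. \<gamma> * t)"
    proof (cases "range (\<lambda>t. \<gamma> * t) \<subseteq> range (\<lambda>t. y * t)")
      case True
      then have "card (range (\<lambda>t. \<gamma> * t)) \<le> card (range (\<lambda>t. y * t))"
        by (intro card_mono) auto
      with greatest[OF that] True have "range (\<lambda>t. \<gamma> * t) = range (\<lambda>t. y * t)"
        by (intro card_subset_eq) auto
      then show ?thesis by simp
    next
      case False
      then show ?thesis
        using chain_ring_on ideal_in_principal unfolding chain_ring_on_def by blast
    qed
    then show ?thesis by (metis mult.right_neutral rangeI subsetD)
  qed
  with \<gamma> show ?thesis by blast
qed

lemma conv_fixed_by_mem_coeffs:
  fixes z v :: "'g::{ab_group_add,finite} \<Rightarrow> 's"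
  assumes "\<And>g. z g \<in> m" and "v = conv v z"
  shows "v = (\<lambda>_. 0)"
proof -
  obtain \<gamma> where "\<gamma> \<in> m" and generates: "\<forall>y\<in>m. \<exists>t. y = \<gamma> * t" using principal by blast
  obtain K where "\<gamma> ^ K = 0" using mem_nilpotent[OF \<open>\<gamma> \<in> m\<close>] by blast
  have "\<forall>g. \<exists>t. z g = \<gamma> * t" using generates assms(1) by blast
  then obtain z' where "\<forall>g. z g = \<gamma> * z' g" by (rule choice[THEN exE])
  then have z_eq: "z = (\<lambda>g. \<gamma> * z' g)" by blast
  have "v = conv v (\<lambda>g. \<gamma> * z' g)" using assms(2) unfolding z_eq .
  then show ?thesis by (rule conv_fixed_by_nilpotent_multiple[OF \<open>\<gamma> ^ K = 0\<close>])
qed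

end

locale residue_map = chain_ring m for m :: "'s::{comm_ring_1,finite} set" +
  fixes p :: "'s \<Rightarrow> 'r::comm_ring_1"
  assumes p_hom: "ring_hom_fun p" and p_surj: "surj p" and p_kernel: "p x = 0 \<longleftrightarrow> x \<in> m"
begin

lemmas p_add = ring_hom_fun_add[OF p_hom] and p_mult = ring_hom_fun_mult[OF p_hom]
  and p_diff = ring_hom_fun_diff[OF p_hom] and p_0 = ring_hom_fun_0[OF p_hom]
  and p_1 = ring_hom_fun_1[OF p_hom]

lemma lift_right_inverse:
  fixes E :: "'g::{ab_group_add,finite} \<Rightarrow> 's"
  shows "(\<exists>w. conv E w = conv_one) \<longleftrightarrow> (\<exists>w. conv (p \<circ> E) w = conv_one)"
proof
  assume "\<exists>w. conv E w = conv_one"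
  then obtain w where "conv E w = conv_one" by blast
  then have "conv (p \<circ> E) (p \<circ> w) = conv_one"
    by (metis ring_hom_fun_conv[OF p_hom] ring_hom_fun_conv_one[OF p_hom])
  then show "\<exists>w. conv (p \<circ> E) w = conv_one" by blast
next
  assume "\<exists>w. conv (p \<circ> E) w = conv_one"
  then obtain w' where w': "conv (p \<circ> E) w' = conv_one" by blast
  define w where "w = inv p \<circ> w'"
  have "p \<circ> w = w'" unfolding w_def using surj_f_inv_f[OF p_surj] by (simp add: fun_eq_iff)
  with w' have "p \<circ> conv E w = conv_one" by (simp add: ring_hom_fun_conv[OF p_hom])
  define z where "z = (\<lambda>g. conv_one g - conv E w g)"
  have z_mem: "z g \<in> m" for g
    using fun_cong[OF \<open>p \<circ> conv E w = conv_one\<close>, of g]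
    by (simp flip: p_kernel add: z_def p_diff p_0 p_1)
  have "v = (\<lambda>_. 0)" if "conv v E = (\<lambda>_. 0)" for v
  proof (rule conv_fixed_by_mem_coeffs[OF z_mem])
    have "conv v (conv E w) = (\<lambda>_. 0)" using that by (simp flip: conv_assoc)
    moreover have "conv E w = (\<lambda>g. conv_one g - z g)" by (simp add: z_def)
    ultimately show "v = conv v z" by (simp add: conv_diff_right fun_eq_iff)
  qed
  then show "\<exists>w. conv E w = conv_one" using conv_inj_iff_right_inverse by blast
qed

end

locale galois_residue = residue_map m p
  for m :: "'s::{comm_ring_1,finite} set" and p :: "'s \<Rightarrow> 'f::{field,finite}" +
  fixes \<sigma> :: "'s \<Rightarrow> 's" and q :: nat
  assumes Aut: "Aut_over {r. \<sigma> r = r} = {id, \<sigma>}" and nontrivial: "\<sigma> \<noteq> id"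
    and Galois: "\<exists>s. \<sigma> s - s \<notin> m"
    and card_residue_field: "card (UNIV :: 'f set) = q ^ 2"
    and card_fixed_residues: "card (p ` {r. \<sigma> r = r}) = q"
begin

abbreviation fixed_residues :: "'f set" where
  "fixed_residues \<equiv> p ` {r. \<sigma> r = r}"

lemma sigma_aut: "ring_aut \<sigma>"
  using Aut unfolding Aut_over_def by blast

lemma sigma_hom: "ring_hom_fun \<sigma>"
  using sigma_aut unfolding ring_aut_def by blast

lemmas sigma_add = ring_hom_fun_add[OF sigma_hom] and sigma_mult = ring_hom_fun_mult[OF sigma_hom]
  and sigma_diff = ring_hom_fun_diff[OF sigma_hom] and sigma_0 = ring_hom_fun_0[OF sigma_hom]

lemma sigma_involutive: "\<sigma> (\<sigma> x) = x"
proof -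
  have "\<sigma> \<circ> \<sigma> \<in> Aut_over {r. \<sigma> r = r}"
    using sigma_aut unfolding Aut_over_def ring_aut_def ring_hom_fun_def by (auto intro: bij_comp)
  then have "\<sigma> \<circ> \<sigma> = id \<or> \<sigma> \<circ> \<sigma> = \<sigma>" using Aut by blast
  moreover have "\<sigma> \<circ> \<sigma> \<noteq> \<sigma>"
  proof
    assume "\<sigma> \<circ> \<sigma> = \<sigma>"
    then have "\<sigma> y = y" for y
      using sigma_aut unfolding ring_aut_def bij_def inj_def by (metis comp_apply)
    with nontrivial show False by auto
  qed
  ultimately show ?thesis by (metis comp_apply id_apply)
qed

lemma ring_involution_sigma: "ring_involution \<sigma>"
  by (simp add: ring_involution_def sigma_hom sigma_involutive)

lemma frobenius: "ring_involution (\<lambda>x::'f. x ^ q)"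
  by (rule ring_involution_frobenius_sqrt_card[OF card_residue_field])

lemma frobenius_add: "(x + y :: 'f) ^ q = x ^ q + y ^ q"
  and frobenius_diff: "(x - y :: 'f) ^ q = x ^ q - y ^ q"
  using ring_hom_fun_add[OF ring_involution.hom[OF frobenius]]
    ring_hom_fun_diff[OF ring_involution.hom[OF frobenius]] by blast+

lemma residue_sigma_cong:
  assumes "p a = p b"
  shows "p (\<sigma> a) = p (\<sigma> b)"
proof -
  have "a - b \<in> m" using assms by (simp flip: p_kernel add: p_diff)
  then have "\<sigma> (a - b) \<in> m" by (rule ring_aut_mem[OF sigma_aut])
  then show ?thesis by (simp flip: p_kernel add: p_diff sigma_diff)
qed

lemma q_ge_2: "q \<ge> 2"
proof (rule ccontr)
  assume "\<not> q \<ge> 2"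
  then have "q = 0 \<or> q = 1" by auto
  then have "card (UNIV :: 'f set) \<le> 1" using card_residue_field by auto
  moreover have "card {0::'f, 1} \<le> card (UNIV :: 'f set)" by (rule card_mono) auto
  ultimately show False by simp
qed

lemma fixed_residues_pow:
  assumes "y \<in> fixed_residues"
  shows "y ^ q = y"
proof -
  have "0 \<in> fixed_residues"
    by (rule image_eqI[of _ _ 0]) (simp_all add: p_0 sigma_0)
  moreover have "x * x' \<in> fixed_residues" if "x \<in> fixed_residues" "x' \<in> fixed_residues" for x x'
  proof -
    from that obtain r r' where "\<sigma> r = r" "\<sigma> r' = r'" "x = p r" "x' = p r'" by blast
    then show ?thesis by (intro image_eqI[of _ _ "r * r'"]) (simp_all add: p_mult sigma_mult)
  qed
  ultimately have "y ^ card fixed_residues = y"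
    using assms by (intro pow_card_mult_closed) auto
  with card_fixed_residues show ?thesis by simp
qed

lemma fixed_residues_eq: "{x. x ^ q = x} = fixed_residues"
proof -
  have "fixed_residues \<subseteq> {x. x ^ q = x}" using fixed_residues_pow by blast
  moreover have "card {x::'f. x ^ q = x} \<le> card fixed_residues"
    using card_pow_fixed_le[OF q_ge_2] card_fixed_residues by simp
  moreover have "card fixed_residues \<le> card {x::'f. x ^ q = x}"
    using calculation(1) by (intro card_mono) auto
  ultimately show ?thesis by (intro card_subset_eq[symmetric]) auto
qed

text \<open>A collision \<open>b + c x = b' + c' x\<close> would make \<open>x\<close> a quotient of fixed residues, hence
  Frobenius-fixed; so the \<open>q\<^sup>2\<close> combinations are distinct and exhaust the residue field.\<close>

lemma fixed_residues_span:
  assumes "x ^ q \<noteq> x"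
  shows "(\<lambda>(b, c). b + c * x) ` (fixed_residues \<times> fixed_residues) = UNIV"
proof -
  have coeffs_eq: "b = b' \<and> c = c'"
    if K: "b \<in> fixed_residues" "c \<in> fixed_residues" "b' \<in> fixed_residues" "c' \<in> fixed_residues"
      and eq: "b + c * x = b' + c' * x" for b c b' c'
  proof (cases "c = c'")
    case True
    with eq show ?thesis by simp
  next
    case False
    with eq have x: "x = (b - b') / (c' - c)" by (simp add: field_simps)
    then have "x ^ q = (b ^ q - b' ^ q) / (c' ^ q - c ^ q)"
      by (simp add: power_divide frobenius_diff)
    also have "\<dots> = x" using K x by (simp add: fixed_residues_pow)
    finally show ?thesis using assms by contradiction
  qed
  have "inj_on (\<lambda>(b, c). b + c * x) (fixed_residues \<times> fixed_residues)"
  proof (rule inj_onI)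
    fix u v
    assume "u \<in> fixed_residues \<times> fixed_residues" "v \<in> fixed_residues \<times> fixed_residues"
      and "(\<lambda>(b, c). b + c * x) u = (\<lambda>(b, c). b + c * x) v"
    moreover obtain b c b' c' where "u = (b, c)" "v = (b', c')" by fastforce
    ultimately show "u = v" using coeffs_eq[of b c b' c'] by simp
  qed
  then have "card ((\<lambda>(b, c). b + c * x) ` (fixed_residues \<times> fixed_residues)) =
      card (UNIV :: 'f set)"
    using card_fixed_residues card_residue_field
    by (simp add: card_image card_cartesian_product power2_eq_square)
  then show ?thesis by (intro card_subset_eq) auto
qed

text \<open>Otherwise \<open>1, p a\<close> would span the residue field over the fixed residues, so every residue
  would be fixed by the automorphism induced by \<open>\<sigma>\<close>, which the Galois condition rules out.\<close>

lemma residue_fixed_by_sigma: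
  assumes "p (\<sigma> a) = p a"
  shows "p a ^ q = p a"
proof (rule ccontr)
  assume "p a ^ q \<noteq> p a"
  have "p (\<sigma> s) = p s" for s
  proof -
    have "p s \<in> (\<lambda>(b, c). b + c * p a) ` (fixed_residues \<times> fixed_residues)"
      using fixed_residues_span[OF \<open>p a ^ q \<noteq> p a\<close>] by simp
    then obtain r1 r2 where r: "\<sigma> r1 = r1" "\<sigma> r2 = r2" and "p s = p r1 + p r2 * p a"
      by auto
    then have "p s = p (r1 + r2 * a)" by (simp add: p_add p_mult)
    then have "p (\<sigma> s) = p (\<sigma> (r1 + r2 * a))" by (rule residue_sigma_cong)
    also have "\<dots> = p r1 + p r2 * p (\<sigma> a)"
      using r by (simp add: sigma_add sigma_mult p_add p_mult)
    finally show ?thesis using assms \<open>p s = p r1 + p r2 * p a\<close> by simp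
  qed
  moreover obtain s where "\<sigma> s - s \<notin> m" using Galois by blast
  ultimately show False by (simp flip: p_kernel add: p_diff)
qed

text \<open>\<open>x = p a\<close> and \<open>y = p (\<sigma> a)\<close> have Frobenius-fixed sum and product, which forces
  \<open>(x\<^sup>q - x) (x\<^sup>q - y) = 0\<close>; and \<open>x\<^sup>q = x\<close> means \<open>x\<close> is a fixed residue, whence \<open>y = x\<close>.\<close>

lemma residue_sigma: "p (\<sigma> a) = p a ^ q"
proof -
  let ?x = "p a" and ?y = "p (\<sigma> a)"
  have sum: "(?x + ?y) ^ q = ?x + ?y"
    by (rule residue_fixed_by_sigma[of "a + \<sigma> a", unfolded p_add])
      (simp add: sigma_add sigma_involutive p_add add.commute)
  have prod: "(?x * ?y) ^ q = ?x * ?y"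
    by (rule residue_fixed_by_sigma[of "a * \<sigma> a", unfolded p_mult])
      (simp add: sigma_mult sigma_involutive p_mult mult.commute)
  have "?x ^ q * ?x ^ q + ?x * ?y = (?x * ?x + ?x * ?y) ^ q"
    using frobenius_add[of "?x * ?x" "?x * ?y"] prod by (simp add: power_mult_distrib)
  also have "\<dots> = ((?x + ?y) * ?x) ^ q" by (simp add: algebra_simps)
  also have "\<dots> = (?x + ?y) * ?x ^ q" using sum by (simp add: power_mult_distrib)
  finally have "(?x ^ q - ?x) * (?x ^ q - ?y) = 0" by (simp add: algebra_simps)
  then consider "?x ^ q = ?x" | "?x ^ q = ?y" by auto
  then show ?thesis
  proof cases
    case 1
    then obtain r where "\<sigma> r = r" "?x = p r" using fixed_residues_eq by blast
    with 1 show ?thesis using residue_sigma_cong[of a r] by simp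
  qed simp
qed

end

theorem theorem4p2:
  fixes \<sigma> :: "'s::{comm_ring_1,finite} \<Rightarrow> 's"
    and m :: "'s set"
    and p :: "'s \<Rightarrow> 'f::{field,finite}"
    and q :: nat
    and d :: "'g::{ab_group_add,finite} \<Rightarrow> 's"
  defines "R \<equiv> {r. \<sigma> r = r}"
  assumes S_chain: "chain_ring_on (UNIV :: 's set)"
    and R_chain: "chain_ring_on R"
    and m_max: "maximal_ideal_in UNIV m"
    and Aut: "Aut_over R = {id, \<sigma>}" and sigma_nontriv: "\<sigma> \<noteq> id"
    and Galois: "\<exists>s. \<sigma> s - s \<notin> m"
    and p_hom: "ring_hom_fun p" and p_surj: "surj p"
    and p_ker: "\<forall>x. p x = 0 \<longleftrightarrow> x \<in> m"
    and F_card: "card (UNIV :: 'f set) = q ^ 2"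
    and R_res_card: "card (p ` R) = q"
    and G_odd: "odd (card (UNIV :: 'g set))"
    and G_coprime: "coprime (card (UNIV :: 'g set)) q"
  shows "herm_LCD \<sigma> (qa_code (\<lambda>g. if g = 0 then 1 else 0) d) \<longleftrightarrow>
           (red_pair p ` qa_code (\<lambda>g. if g = 0 then 1 else 0) d
              = qa_code (\<lambda>g. if g = 0 then 1 else 0) (p \<circ> d)
            \<and> herm_LCD (\<lambda>x. x ^ q) (qa_code (\<lambda>g. if g = 0 then 1 else 0) (p \<circ> d)))"
proof -
  interpret galois_residue m p \<sigma> q
    using S_chain m_max Aut sigma_nontriv Galois p_hom p_surj p_ker F_card R_res_card
    unfolding R_def by unfold_locales auto
  have gram: "p \<circ> herm_gram \<sigma> d = herm_gram (\<lambda>x. x ^ q) (p \<circ> d)"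
    by (rule ring_hom_fun_herm_gram[OF p_hom]) (rule residue_sigma)
  have "herm_LCD \<sigma> (qa_code conv_one d) \<longleftrightarrow> (\<exists>w. conv (herm_gram \<sigma> d) w = conv_one)"
    by (simp add: ring_involution.herm_LCD_qa_code_one_iff[OF ring_involution_sigma]
        conv_inj_iff_right_inverse)
  also have "\<dots> \<longleftrightarrow> (\<exists>w. conv (herm_gram (\<lambda>x. x ^ q) (p \<circ> d)) w = conv_one)"
    by (simp only: lift_right_inverse gram)
  also have "\<dots> \<longleftrightarrow> herm_LCD (\<lambda>x. x ^ q) (qa_code conv_one (p \<circ> d))"
    by (simp add: ring_involution.herm_LCD_qa_code_one_iff[OF frobenius]
        conv_inj_iff_right_inverse)
  moreover have "red_pair p ` qa_code conv_one d = qa_code conv_one (p \<circ> d)"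
    by (simp only: red_pair_qa_code[OF p_hom p_surj] ring_hom_fun_conv_one[OF p_hom])
  ultimately show ?thesis by simp
qed

end
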